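(* There exists a constant $b>0$ such that for every $n,m\in\mathbb{N}^+$ and every sequence of samples $(x_1,y_1),\dots,(x_m,y_m)$ with $x_j\in\mathcal{B}^n$, $y_j\in\mathcal{B}$, which is consistent with some function $\mathcal{B}^n\to\mathcal{B}$ (i.e. $x_j=x_k$ implies $y_j=y_k$), there exists a Boolean circuit on $n$ inputs of size at most $bm$ that outputs $y_j$ on input $x_j$ for every $j=1,\dots,m$.
   Context: Let $\mathcal{B}=\{0,1\}$. A Boolean circuit on $n$ inputs is a DAG with a unique sink (output) whose sources are labelled by input indices in $\{1,\dots,n\}$ and whose other vertices (gates) are labelled AND, OR (two incoming edges) or NOT (one incoming edge); it computes a function $\mathcal{B}^n\to\mathcal{B}$ in the usual way; its size is its number of vertices. *)

theory Defs
  imports Complex_Main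
begin

text \<open>A Boolean circuit is represented as a DAG listed in topological order:
  vertex i is the i-th list element; its incoming edges come from the
  (strictly earlier) vertices named in its label.\<close>

datatype gate = Inp nat | AndG nat nat | OrG nat nat | NotG nat

fun gate_preds :: "gate \<Rightarrow> nat set" where
  "gate_preds (Inp k) = {}"
| "gate_preds (AndG a b) = {a, b}"
| "gate_preds (OrG a b) = {a, b}"
| "gate_preds (NotG a) = {a}"

fun gate_ok :: "nat \<Rightarrow> nat \<Rightarrow> gate \<Rightarrow> bool" where
  "gate_ok n i (Inp k) = (k < n)"
| "gate_ok n i (AndG a b) = (a < i \<and> b < i \<and> a \<noteq> b)"
| "gate_ok n i (OrG a b) = (a < i \<and> b < i \<and> a \<noteq> b)"
| "gate_ok n i (NotG a) = (a < i)"

text \<open>Well-formed circuit on n inputs: nonempty, edges point backwards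
  (acyclic), AND/OR have two distinct in-neighbours, NOT one, sources are
  labelled with input indices, and the last vertex is the unique sink
  (every other vertex has an outgoing edge).\<close>
definition wf_circuit :: "nat \<Rightarrow> gate list \<Rightarrow> bool" where
  "wf_circuit n c \<longleftrightarrow> c \<noteq> [] \<and>
     (\<forall>i < length c. gate_ok n i (c ! i)) \<and>
     (\<forall>i < length c - 1. \<exists>j < length c. i \<in> gate_preds (c ! j))"

fun gate_val :: "bool list \<Rightarrow> bool list \<Rightarrow> gate \<Rightarrow> bool" where
  "gate_val x vs (Inp k) = x ! k"
| "gate_val x vs (AndG a b) = (vs ! a \<and> vs ! b)"
| "gate_val x vs (OrG a b) = (vs ! a \<or> vs ! b)"
| "gate_val x vs (NotG a) = (\<not> vs ! a)"

definition circuit_eval :: "gate list \<Rightarrow> bool list \<Rightarrow> bool" where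
  "circuit_eval c x = last (foldl (\<lambda>vs g. vs @ [gate_val x vs g]) [] c)"

definition circuit_size :: "gate list \<Rightarrow> nat" where
  "circuit_size c = length c"

end

theory Submission
  imports Defs
begin

text \<open>A decision tree does it. If all sample inputs in a set S have the same output,
  a constant circuit (x0 OR NOT x0, or x0 AND NOT x0) of 3 gates works. Otherwise two
  inputs with different outputs differ in some coordinate i; splitting S by the value of xi
  gives two smaller sets, and circuits for them are joined by the 5-gate multiplexer
  (xi AND a) OR (NOT xi AND b). By induction the circuit has at most
  8 |S| - 5 gates.\<close>

definition eval_step :: "bool list \<Rightarrow> bool list \<Rightarrow> gate \<Rightarrow> bool list" where
  "eval_step x vs g = vs @ [gate_val x vs g]"

definition circuit_values :: "bool list \<Rightarrow> gate list \<Rightarrow> bool list" where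
  "circuit_values x c = foldl (eval_step x) [] c"

lemma circuit_eval_eq_last_values: "circuit_eval c x = last (circuit_values x c)"
  unfolding circuit_eval_def circuit_values_def eval_step_def by simp

lemma length_foldl_eval_step: "length (foldl (eval_step x) vs c) = length vs + length c"
  by (induction c arbitrary: vs) (auto simp: eval_step_def)

lemma length_circuit_values [simp]: "length (circuit_values x c) = length c"
  by (simp add: circuit_values_def length_foldl_eval_step)

lemma circuit_values_snoc:
  "circuit_values x (c @ [g]) = circuit_values x c @ [gate_val x (circuit_values x c) g]"
  by (simp add: circuit_values_def eval_step_def)

lemma circuit_eval_eq_nth_values:
  assumes "c \<noteq> []"
  shows "circuit_eval c x = circuit_values x c ! (length c - 1)"
proof -
  have "circuit_values x c \<noteq> []"
    using assms by (metis length_0_conv length_circuit_values)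
  then show ?thesis by (simp add: circuit_eval_eq_last_values last_conv_nth)
qed

fun shift_gate :: "nat \<Rightarrow> gate \<Rightarrow> gate" where
  "shift_gate d (Inp k) = Inp k"
| "shift_gate d (AndG a b) = AndG (a + d) (b + d)"
| "shift_gate d (OrG a b) = OrG (a + d) (b + d)"
| "shift_gate d (NotG a) = NotG (a + d)"

lemma gate_ok_shift_gate: "gate_ok n i g \<Longrightarrow> gate_ok n (i + d) (shift_gate d g)"
  by (cases g) auto

lemma gate_preds_shift_gate: "gate_preds (shift_gate d g) = (\<lambda>a. a + d) ` gate_preds g"
  by (cases g) auto

lemma gate_val_shift_gate:
  assumes "gate_ok n (length vs) g" "length us = d"
  shows "gate_val x (us @ vs) (shift_gate d g) = gate_val x vs g"
  using assms by (cases g) (auto simp: nth_append)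

lemma circuit_values_append_shifted:
  assumes "\<forall>i < length c'. gate_ok n i (c' ! i)"
  shows "circuit_values x (c @ map (shift_gate (length c)) c')
       = circuit_values x c @ circuit_values x c'"
  using assms
proof (induction c' rule: rev_induct)
  case Nil
  then show ?case by (simp add: circuit_values_def)
next
  case (snoc g c')
  have "gate_ok n i (c' ! i)" if "i < length c'" for i
    using that snoc.prems[rule_format, of i] by (simp add: nth_append)
  then have IH: "circuit_values x (c @ map (shift_gate (length c)) c')
      = circuit_values x c @ circuit_values x c'"
    using snoc.IH by blast
  have "gate_ok n (length (circuit_values x c')) g"
    using snoc.prems[rule_format, of "length c'"] by simp
  then have "gate_val x (circuit_values x c @ circuit_values x c') (shift_gate (length c) g)
      = gate_val x (circuit_values x c') g"
    by (simp add: gate_val_shift_gate)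
  then show ?case
    using circuit_values_snoc[of x "c @ map (shift_gate (length c)) c'"]
    by (simp add: IH circuit_values_snoc)
qed

definition const_circuit :: "bool \<Rightarrow> gate list" where
  "const_circuit b = [Inp 0, NotG 0, if b then OrG 0 1 else AndG 0 1]"

lemma length_const_circuit: "length (const_circuit b) = 3"
  by (simp add: const_circuit_def)

lemma wf_const_circuit: "n > 0 \<Longrightarrow> wf_circuit n (const_circuit b)"
  unfolding wf_circuit_def const_circuit_def by (cases b) (auto simp: less_Suc_eq nth_Cons')

lemma circuit_eval_const_circuit: "circuit_eval (const_circuit b) x = b"
  unfolding circuit_eval_def const_circuit_def by (cases b) auto

definition mux_gates :: "nat \<Rightarrow> nat \<Rightarrow> nat \<Rightarrow> nat \<Rightarrow> gate list" where
  "mux_gates p i a b = [Inp i, NotG p, AndG p a, AndG (p + 1) b, OrG (p + 2) (p + 3)]"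

definition mux_circuit :: "nat \<Rightarrow> gate list \<Rightarrow> gate list \<Rightarrow> gate list" where
  "mux_circuit i c1 c0 =
     c1 @ map (shift_gate (length c1)) c0 @
     mux_gates (length c1 + length c0) i (length c1 - 1) (length c1 + length c0 - 1)"

lemma length_mux_circuit: "length (mux_circuit i c1 c0) = length c1 + length c0 + 5"
  by (simp add: mux_circuit_def mux_gates_def)

lemma nth_mux_circuit_left:
  "k < length c1 \<Longrightarrow> mux_circuit i c1 c0 ! k = c1 ! k"
  by (simp add: mux_circuit_def nth_append)

lemma nth_mux_circuit_right:
  assumes "k < length c0"
  shows "mux_circuit i c1 c0 ! (length c1 + k) = shift_gate (length c1) (c0 ! k)"
  using assms by (simp add: mux_circuit_def nth_append)

lemma nth_mux_circuit_top:
  assumes "t < 5"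
  shows "mux_circuit i c1 c0 ! (length c1 + length c0 + t) =
    mux_gates (length c1 + length c0) i (length c1 - 1) (length c1 + length c0 - 1) ! t"
  using assms by (simp add: mux_circuit_def mux_gates_def nth_append)

lemma gate_ok_mux_gates:
  assumes "i < n" "a < p" "b < p" "t < 5"
  shows "gate_ok n (p + t) (mux_gates p i a b ! t)"
proof -
  have "t = 0 \<or> t = 1 \<or> t = 2 \<or> t = 3 \<or> t = 4"
    using assms(4) by arith
  then show ?thesis
    using assms(1-3) by (auto simp: mux_gates_def)
qed

lemma mux_gates_has_successor:
  assumes "t < 4"
  shows "\<exists>s < 5. p + t \<in> gate_preds (mux_gates p i a b ! s)"
proof -
  have "t = 0 \<or> t = 1 \<or> t = 2 \<or> t = 3"
    using assms by arith
  then show ?thesis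
    by (elim disjE) (rule exI[of _ 1] exI[of _ 3] exI[of _ 4], simp add: mux_gates_def)+
qed

lemma last_foldl_mux_gates:
  assumes "length vs = p" "a < p" "b < p"
  shows "last (foldl (eval_step x) vs (mux_gates p i a b)) = (if x ! i then vs ! a else vs ! b)"
  using assms by (simp add: mux_gates_def eval_step_def nth_append)

lemma circuit_eval_mux_circuit:
  assumes "wf_circuit n c1" "wf_circuit n c0"
  shows "circuit_eval (mux_circuit i c1 c0) x =
     (if x ! i then circuit_eval c1 x else circuit_eval c0 x)"
proof -
  let ?l1 = "length c1" and ?l0 = "length c0"
  let ?vs = "circuit_values x c1 @ circuit_values x c0"
  have nonempty: "c1 \<noteq> []" "c0 \<noteq> []"
    using assms by (auto simp: wf_circuit_def)
  then have pos: "?l1 > 0" "?l0 > 0"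
    by simp_all
  have "circuit_values x (mux_circuit i c1 c0) =
      foldl (eval_step x) ?vs (mux_gates (?l1 + ?l0) i (?l1 - 1) (?l1 + ?l0 - 1))"
    using circuit_values_append_shifted[of c0 n x c1] assms(2)
    by (simp add: mux_circuit_def circuit_values_def wf_circuit_def flip: append_assoc)
  moreover have "?vs ! (?l1 - 1) = circuit_eval c1 x"
    using nonempty by (simp add: circuit_eval_eq_nth_values nth_append)
  moreover have "?vs ! (?l1 + ?l0 - 1) = circuit_eval c0 x"
  proof -
    have "\<not> ?l1 + ?l0 - 1 < ?l1" "?l1 + ?l0 - 1 - ?l1 = ?l0 - 1"
      using pos by arith+
    then show ?thesis by (simp add: circuit_eval_eq_nth_values nonempty nth_append)
  qed
  moreover have "?l1 - 1 < ?l1 + ?l0" "?l1 + ?l0 - 1 < ?l1 + ?l0"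
    using pos by arith+
  ultimately show ?thesis
    by (simp add: circuit_eval_eq_last_values last_foldl_mux_gates)
qed

lemma gate_ok_mux_circuit:
  assumes "wf_circuit n c1" "wf_circuit n c0" "i < n" "k < length (mux_circuit i c1 c0)"
  shows "gate_ok n k (mux_circuit i c1 c0 ! k)"
proof -
  let ?l1 = "length c1" and ?l0 = "length c0"
  let ?p = "?l1 + ?l0"
  have pos: "?l1 > 0" "?l0 > 0"
    using assms(1,2) by (auto simp: wf_circuit_def)
  consider "k < ?l1" | "?l1 \<le> k" "k < ?p" | "?p \<le> k" "k < ?p + 5"
    using assms(4) unfolding length_mux_circuit by linarith
  then show ?thesis
  proof cases
    case 1
    then show ?thesis
      using assms(1) by (simp add: nth_mux_circuit_left wf_circuit_def)
  next
    case 2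
    define k' where "k' = k - ?l1"
    have k': "k = ?l1 + k'" "k' < ?l0"
      using 2 unfolding k'_def by arith+
    then have "gate_ok n (?l1 + k') (shift_gate ?l1 (c0 ! k'))"
      using assms(2) gate_ok_shift_gate[of n k' "c0 ! k'" ?l1]
      by (simp add: wf_circuit_def add.commute)
    then show ?thesis
      using k' by (simp add: nth_mux_circuit_right)
  next
    case 3
    define t where "t = k - ?p"
    have "k = ?p + t" "t < 5"
      using 3 unfolding t_def by arith+
    moreover have "?l1 - 1 < ?p" "?p - 1 < ?p"
      using pos by arith+
    ultimately show ?thesis
      using assms(3) by (simp add: nth_mux_circuit_top gate_ok_mux_gates)
  qed
qed

lemma mux_circuit_has_successor:
  assumes "wf_circuit n c1" "wf_circuit n c0" "k < length (mux_circuit i c1 c0) - 1"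
  shows "\<exists>j < length (mux_circuit i c1 c0). k \<in> gate_preds (mux_circuit i c1 c0 ! j)"
proof -
  let ?c = "mux_circuit i c1 c0"
  let ?l1 = "length c1" and ?l0 = "length c0"
  let ?p = "?l1 + ?l0"
  let ?g = "mux_gates ?p i (?l1 - 1) (?p - 1)"
  have pos: "?l1 > 0" "?l0 > 0"
    using assms(1,2) by (auto simp: wf_circuit_def)
  have len: "length ?c = ?p + 5"
    by (rule length_mux_circuit)
  have top: "?c ! (?p + t) = ?g ! t" if "t < 5" for t
    using that by (rule nth_mux_circuit_top)
  consider "k < ?l1 - 1" | "k = ?l1 - 1" | "?l1 \<le> k" "k < ?p - 1" | "k = ?p - 1"
    | "?p \<le> k" "k < ?p + 4"
    using assms(3) pos len by linarith
  then show ?thesis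
  proof cases
    case 1
    then obtain j where "j < ?l1" "k \<in> gate_preds (c1 ! j)"
      using assms(1) by (auto simp: wf_circuit_def)
    then show ?thesis
      using len by (intro exI[of _ j]) (simp add: nth_mux_circuit_left)
  next
    case 2
    then show ?thesis
      using len top[of 2] by (intro exI[of _ "?p + 2"]) (simp add: mux_gates_def)
  next
    case 3
    define k' where "k' = k - ?l1"
    have k': "k = ?l1 + k'" "k' < ?l0 - 1"
      using 3 unfolding k'_def by arith+
    then obtain j where "j < ?l0" "k' \<in> gate_preds (c0 ! j)"
      using assms(2) by (auto simp: wf_circuit_def)
    then show ?thesis
      using k' len by (intro exI[of _ "?l1 + j"]) (auto simp: nth_mux_circuit_right gate_preds_shift_gate)
  next
    case 4
    then show ?thesis
      using len top[of 3] by (intro exI[of _ "?p + 3"]) (simp add: mux_gates_def)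
  next
    case 5
    define t where "t = k - ?p"
    have "k = ?p + t" "t < 4"
      using 5 unfolding t_def by arith+
    then obtain s where "s < 5" "k \<in> gate_preds (?g ! s)"
      using mux_gates_has_successor by blast
    then show ?thesis
      using len top[of s] by (intro exI[of _ "?p + s"]) simp
  qed
qed

lemma wf_mux_circuit:
  assumes "wf_circuit n c1" "wf_circuit n c0" "i < n"
  shows "wf_circuit n (mux_circuit i c1 c0)"
proof -
  have "mux_circuit i c1 c0 \<noteq> []"
    using length_mux_circuit[of i c1 c0] by auto
  then show ?thesis
    using gate_ok_mux_circuit[OF assms] mux_circuit_has_successor[OF assms(1,2)]
    by (simp add: wf_circuit_def)
qed

lemma exists_splitting_coordinate:
  assumes "\<forall>x\<in>S. length x = n" "x \<in> S" "y \<in> S" "x \<noteq> y"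
  shows "\<exists>i < n. (\<exists>x\<in>S. x ! i) \<and> (\<exists>y\<in>S. \<not> y ! i)"
proof -
  have "length x = n" "length y = n"
    using assms by auto
  then obtain i where i: "i < n" "x ! i \<noteq> y ! i"
    using assms(4) nth_equalityI[of x y] by auto
  then show ?thesis
    using assms(2,3) by (cases "x ! i") auto
qed

lemma exists_circuit_on_finite_set:
  assumes "finite S" "S \<noteq> {}" "\<forall>x\<in>S. length x = n" "n > 0"
  shows "\<exists>c. wf_circuit n c \<and> length c + 5 \<le> 8 * card S \<and> (\<forall>x\<in>S. circuit_eval c x = f x)"
  using assms(1-3)
proof (induction "card S" arbitrary: S rule: less_induct)
  case less
  show ?case
  proof (cases "\<exists>b. \<forall>x\<in>S. f x = b")
    case True
    then obtain b where "\<forall>x\<in>S. f x = b" ..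
    moreover have "card S \<ge> 1"
      using less.prems by (simp add: Suc_leI card_gt_0_iff)
    ultimately show ?thesis
      using assms(4) by (intro exI[of _ "const_circuit b"])
        (simp add: wf_const_circuit length_const_circuit circuit_eval_const_circuit)
  next
    case False
    obtain x where "x \<in> S"
      using less.prems(2) by blast
    moreover obtain y where "y \<in> S" "f y \<noteq> f x"
      using False by blast
    ultimately have "x \<noteq> y" "x \<in> S" "y \<in> S"
      by auto
    then obtain i where i: "i < n" "\<exists>x\<in>S. x ! i" "\<exists>y\<in>S. \<not> y ! i"
      using exists_splitting_coordinate[OF less.prems(3)] by blast
    define S1 where "S1 = {x\<in>S. x ! i}"
    define S0 where "S0 = {x\<in>S. \<not> x ! i}"
    have split: "S = S1 \<union> S0" "S1 \<inter> S0 = {}"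
      by (auto simp: S1_def S0_def)
    have finite: "finite S1" "finite S0"
      using less.prems(1) by (auto simp: S1_def S0_def)
    have nonempty: "S1 \<noteq> {}" "S0 \<noteq> {}"
      using i by (auto simp: S1_def S0_def)
    have card_split: "card S = card S1 + card S0"
      using split finite by (simp add: card_Un_disjoint)
    then have smaller: "card S1 < card S" "card S0 < card S"
      using nonempty finite by (auto simp: card_gt_0_iff)
    have "\<forall>x\<in>S1. length x = n" "\<forall>x\<in>S0. length x = n"
      using less.prems(3) by (auto simp: S1_def S0_def)
    then obtain c1 c0 where
      c1: "wf_circuit n c1" "length c1 + 5 \<le> 8 * card S1" "\<forall>x\<in>S1. circuit_eval c1 x = f x" and
      c0: "wf_circuit n c0" "length c0 + 5 \<le> 8 * card S0" "\<forall>x\<in>S0. circuit_eval c0 x = f x"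
      using less.hyps[OF smaller(1) finite(1) nonempty(1)] less.hyps[OF smaller(2) finite(2) nonempty(2)]
      by blast
    have "\<forall>x\<in>S. circuit_eval (mux_circuit i c1 c0) x = f x"
      using c1(1,3) c0(1,3) by (simp add: circuit_eval_mux_circuit S1_def S0_def)
    then show ?thesis
      using c1(1,2) c0(1,2) i(1) card_split
      by (intro exI[of _ "mux_circuit i c1 c0"]) (simp add: wf_mux_circuit length_mux_circuit)
  qed
qed

lemma consistent_samples_function:
  assumes "\<forall>j < m. \<forall>k < m. xs j = xs k \<longrightarrow> ys j = ys k"
  shows "\<exists>f. \<forall>j < m. f (xs j) = ys j"
proof (intro exI allI impI)
  fix j assume "j < m"
  let ?k = "SOME k. k < m \<and> xs k = xs j"
  have "?k < m \<and> xs ?k = xs j"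
    using \<open>j < m\<close> by (intro someI[where P = "\<lambda>k. k < m \<and> xs k = xs j" and x = j]) simp
  then show "ys (SOME k. k < m \<and> xs k = xs j) = ys j"
    using assms \<open>j < m\<close> by blast
qed

theorem mainTheorem19:
  shows "\<exists>b::real. b > 0 \<and>
    (\<forall>n m :: nat. \<forall>xs :: nat \<Rightarrow> bool list. \<forall>ys :: nat \<Rightarrow> bool.
       n > 0 \<longrightarrow> m > 0 \<longrightarrow>
       (\<forall>j < m. length (xs j) = n) \<longrightarrow>
       (\<forall>j < m. \<forall>k < m. xs j = xs k \<longrightarrow> ys j = ys k) \<longrightarrow>
       (\<exists>c. wf_circuit n c \<and> real (circuit_size c) \<le> b * real m \<and>
            (\<forall>j < m. circuit_eval c (xs j) = ys j)))"
proof (intro exI[of _ 8] conjI allI impI)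
  fix n m :: nat and xs :: "nat \<Rightarrow> bool list" and ys :: "nat \<Rightarrow> bool"
  assume n: "n > 0" and m: "m > 0" and len: "\<forall>j < m. length (xs j) = n"
    and consistent: "\<forall>j < m. \<forall>k < m. xs j = xs k \<longrightarrow> ys j = ys k"
  obtain f where f: "\<forall>j < m. f (xs j) = ys j"
    using consistent_samples_function[OF consistent] by blast
  let ?S = "xs ` {..<m}"
  have "finite ?S" "?S \<noteq> {}" "\<forall>x\<in>?S. length x = n"
    using m len by auto
  then obtain c where c: "wf_circuit n c" "length c + 5 \<le> 8 * card ?S"
      "\<forall>x\<in>?S. circuit_eval c x = f x"
    using exists_circuit_on_finite_set n by blast
  have "card ?S \<le> m"
    using card_image_le[of "{..<m}" xs] by simp
  then have "real (circuit_size c) \<le> 8 * real m"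
    using c(2) by (simp add: circuit_size_def)
  moreover have "\<forall>j < m. circuit_eval c (xs j) = ys j"
    using c(3) f by simp
  ultimately show "\<exists>c. wf_circuit n c \<and> real (circuit_size c) \<le> 8 * real m \<and>
      (\<forall>j < m. circuit_eval c (xs j) = ys j)"
    using c(1) by blast
qed simp

end
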